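(* Let $k$ be a field and let $M$ be the commutative monoid generated by elements $r_1,\ldots,r_{n_1},s_1,\ldots,s_{n_2}$ subject to the single relation $\sum_{i=1}^{n_1}r_i=\sum_{j=1}^{n_2}s_j$. Then any small $\mathbb{Q}$-factorialization of the affine toric variety $W=\mathrm{Spec}(k[M])$ is a log resolution.
   Context: Small $\mathbb{Q}$-factorializations of the toric variety $W$ are understood as toric ones, i.e. the toric varieties given by simplicial subdivisions of the cone of $W$ that introduce no new rays; a log resolution here means the variety is smooth (so its torus-invariant boundary is snc). *)

theory Defs
  imports "HOL-Analysis.Analysis"
begin

text \<open>Combinatorial model of the affine toric variety W = Spec k[M], where M is the
commutative monoid generated by r_i (i in 'a) and s_j (j in 'b) subject to
sum r_i = sum s_j.  The dual lattice N = Hom(M^gp, Z) is realised inside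
real^('a+'b) as the integer points of the hyperplane sum_i a_i = sum_j b_j,
and the cone of W is the nonnegative part of that hyperplane.\<close>

definition hyp :: "(real^('a::finite + 'b::finite)) set" where
  "hyp = {v. (\<Sum>i\<in>UNIV. v $ Inl i) = (\<Sum>j\<in>UNIV. v $ Inr j)}"

definition latN :: "(real^('a::finite + 'b::finite)) set" where
  "latN = {v \<in> hyp. \<forall>k. v $ k \<in> \<int>}"

definition sigma_cone :: "(real^('a::finite + 'b::finite)) set" where
  "sigma_cone = {v \<in> hyp. \<forall>k. 0 \<le> v $ k}"

definition ray :: "'a \<Rightarrow> 'b \<Rightarrow> real^('a::finite + 'b::finite)" where
  "ray i j = axis (Inl i) 1 + axis (Inr j) 1"

definition rays :: "(real^('a::finite + 'b::finite)) set" where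
  "rays = {ray i j | i j. True}"

definition pos_hull :: "'v::real_vector set \<Rightarrow> 'v set" where
  "pos_hull S = {\<Sum>v\<in>S. c v *\<^sub>R v | c. \<forall>v\<in>S. 0 \<le> c v}"

definition int_span :: "'v::real_vector set \<Rightarrow> 'v set" where
  "int_span S = {\<Sum>v\<in>S. of_int (c v) *\<^sub>R v | c. True}"

definition lattice_basis :: "(real^('a::finite + 'b::finite)) set \<Rightarrow> bool" where
  "lattice_basis B \<longleftrightarrow> finite B \<and> independent B \<and> int_span B = latN"

definition smooth_cone :: "(real^('a::finite + 'b::finite)) set \<Rightarrow> bool" where
  "smooth_cone S \<longleftrightarrow> (\<exists>B. S \<subseteq> B \<and> lattice_basis B)"

text \<open>A small Q-factorialization of W: a fan, given by the generator sets of its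
cones, consisting of simplicial cones spanned by rays of sigma (no new rays),
closed under faces, any two cones meeting in a common face, with support sigma.\<close>
definition small_Q_factorialization ::
  "(real^('a::finite + 'b::finite)) set set \<Rightarrow> bool" where
  "small_Q_factorialization F \<longleftrightarrow>
     finite F \<and>
     (\<forall>S\<in>F. S \<subseteq> rays \<and> independent S) \<and>
     (\<forall>S\<in>F. \<forall>T. T \<subseteq> S \<longrightarrow> T \<in> F) \<and>
     (\<forall>S\<in>F. \<forall>T\<in>F. pos_hull S \<inter> pos_hull T = pos_hull (S \<inter> T)) \<and>
     \<Union> (pos_hull ` F) = sigma_cone"

text \<open>The toric variety of F is a log resolution iff it is smooth, i.e. every cone is smooth.\<close>
definition log_resolution :: "(real^('a::finite + 'b::finite)) set set \<Rightarrow> bool" where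
  "log_resolution F \<longleftrightarrow> (\<forall>S\<in>F. smooth_cone S)"

end

theory Submission
  imports Defs
begin

text \<open>The rays e_i + f_j of sigma are the columns of the incidence matrix of the complete
bipartite graph on the index sets of the r_i and of the s_j, and this matrix is totally
unimodular. Concretely, extend the generators S of a cone to a set B of rays that is maximal
linearly independent. Writing e_i + f_j = w_i - w_j with w_i = e_i and w_j = -f_j, let C be
the set of vertices u for which w_u - w_(i0) lies in the integer span of B. Every edge in B
joins two vertices of C or two vertices outside C, so the signed indicator functional of C
vanishes on B, hence on all rays; as the graph is connected, C contains every vertex. Thus
every ray is an integer combination of B, and the rays generate N.\<close>

lemma int_span_0: "0 \<in> int_span S"
  unfolding int_span_def by (intro CollectI exI[of _ "\<lambda>_. 0"]) simp

lemma int_span_add: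
  assumes "x \<in> int_span S" "y \<in> int_span S"
  shows "x + y \<in> int_span S"
proof -
  obtain c d where "x = (\<Sum>v\<in>S. of_int (c v) *\<^sub>R v)" "y = (\<Sum>v\<in>S. of_int (d v) *\<^sub>R v)"
    using assms unfolding int_span_def by auto
  then have "x + y = (\<Sum>v\<in>S. of_int (c v + d v) *\<^sub>R v)"
    by (simp add: sum.distrib scaleR_add_left)
  then show ?thesis unfolding int_span_def by (intro CollectI exI[of _ "\<lambda>v. c v + d v"]) simp
qed

lemma int_span_scaleR_of_int:
  assumes "x \<in> int_span S"
  shows "of_int n *\<^sub>R x \<in> int_span S"
proof -
  obtain c where "x = (\<Sum>v\<in>S. of_int (c v) *\<^sub>R v)"
    using assms unfolding int_span_def by auto
  then have "of_int n *\<^sub>R x = (\<Sum>v\<in>S. of_int (n * c v) *\<^sub>R v)"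
    by (simp add: scaleR_sum_right)
  then show ?thesis unfolding int_span_def by (intro CollectI exI[of _ "\<lambda>v. n * c v"]) simp
qed

lemma int_span_diff: "x \<in> int_span S \<Longrightarrow> y \<in> int_span S \<Longrightarrow> x - y \<in> int_span S"
  using int_span_add[of x S "-y"] int_span_scaleR_of_int[of y S "-1"] by simp

lemma int_span_superset:
  assumes "finite S" "x \<in> S"
  shows "x \<in> int_span S"
proof -
  have "x = (\<Sum>v\<in>S. of_int (if v = x then 1 else 0) *\<^sub>R v)"
    using assms by (simp add: if_distrib[of "\<lambda>c. of_int c *\<^sub>R _"] cong: if_cong)
  then show ?thesis
    unfolding int_span_def by (intro CollectI exI[of _ "\<lambda>v. if v = x then 1 else 0"]) simp
qed

lemma int_span_sum:
  "finite A \<Longrightarrow> (\<And>a. a \<in> A \<Longrightarrow> f a \<in> int_span S) \<Longrightarrow> sum f A \<in> int_span S"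
  by (induction A rule: finite_induct) (auto intro: int_span_add int_span_0)

lemma ray_nth: "ray i j $ k = (if k = Inl i \<or> k = Inr j then 1 else 0)"
  unfolding ray_def axis_def by auto

lemma rays_subset_latN: "rays \<subseteq> latN"
  unfolding rays_def latN_def hyp_def by (auto simp: ray_nth)

lemma finite_rays: "finite (rays :: (real^('a::finite + 'b::finite)) set)"
proof -
  have "(rays :: (real^('a + 'b)) set) = (\<lambda>(i, j). ray i j) ` UNIV"
    unfolding rays_def by auto
  then show ?thesis by (metis finite finite_imageI)
qed

lemma int_span_subset_latN:
  assumes "B \<subseteq> latN"
  shows "int_span B \<subseteq> latN"
proof
  fix x assume "x \<in> int_span B"
  then obtain c where x: "x = (\<Sum>v\<in>B. of_int (c v) *\<^sub>R v)"
    unfolding int_span_def by auto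
  have "(\<Sum>i\<in>UNIV. x $ Inl i) = (\<Sum>v\<in>B. of_int (c v) * (\<Sum>i\<in>UNIV. v $ Inl i))"
    unfolding x by (simp add: sum_distrib_left sum.swap[of _ UNIV])
  also have "\<dots> = (\<Sum>v\<in>B. of_int (c v) * (\<Sum>j\<in>UNIV. v $ Inr j))"
    using assms unfolding latN_def hyp_def by (intro sum.cong) auto
  also have "\<dots> = (\<Sum>j\<in>UNIV. x $ Inr j)"
    unfolding x by (simp add: sum_distrib_left sum.swap[of _ UNIV])
  finally have "x \<in> hyp" unfolding hyp_def by simp
  moreover have "\<forall>k. x $ k \<in> \<int>"
    using assms unfolding x latN_def by (auto intro!: Ints_sum Ints_mult)
  ultimately show "x \<in> latN" unfolding latN_def by simp
qed

lemma latN_subset_int_span: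
  fixes B :: "(real^('a::finite + 'b::finite)) set"
  assumes rays_B: "\<And>i j. ray i j \<in> int_span B"
  shows "latN \<subseteq> int_span B"
proof
  fix v :: "real^('a + 'b)" assume v: "v \<in> latN"
  define n where "n k = \<lfloor>v $ k\<rfloor>" for k
  have v_n: "v $ k = of_int (n k)" for k
    using v unfolding latN_def n_def by auto
  have balanced: "(\<Sum>i\<in>UNIV. of_int (n (Inl i))) = (\<Sum>j\<in>UNIV. (of_int (n (Inr j)) :: real))"
    using v unfolding latN_def hyp_def by (simp add: v_n)
  fix i0 :: 'a and j0 :: 'b
  define w where "w = (\<Sum>i\<in>UNIV. of_int (n (Inl i)) *\<^sub>R ray i j0)
      + (\<Sum>j\<in>UNIV. of_int (n (Inr j)) *\<^sub>R ray i0 j) - of_int (\<Sum>i\<in>UNIV. n (Inl i)) *\<^sub>R ray i0 j0"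
  have "v $ k = w $ k" for k
    unfolding w_def
    by (cases k) (use balanced in \<open>auto simp: v_n ray_nth if_distrib cong: if_cong\<close>)
  then have "v = w" by (simp add: vec_eq_iff)
  also have "w \<in> int_span B"
    unfolding w_def by (intro int_span_diff int_span_add int_span_sum int_span_scaleR_of_int rays_B) auto
  finally show "v \<in> int_span B" .
qed

definition side_sign :: "'a + 'b \<Rightarrow> real" where
  "side_sign u = (case u of Inl _ \<Rightarrow> 1 | Inr _ \<Rightarrow> -1)"

definition signed_axis :: "'a + 'b \<Rightarrow> real^('a::finite + 'b::finite)" where
  "signed_axis u = axis u (side_sign u)"

definition signed_indicator :: "('a + 'b) set \<Rightarrow> real^('a::finite + 'b::finite) \<Rightarrow> real" where
  "signed_indicator C x = (\<Sum>u\<in>C. side_sign u * x $ u)"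

lemma ray_eq_signed_axis_diff: "ray i j = signed_axis (Inl i) - signed_axis (Inr j)"
  unfolding ray_def signed_axis_def side_sign_def by (simp add: axis_def vec_eq_iff)

lemma linear_signed_indicator: "linear (signed_indicator C)"
  by (rule linearI) (simp_all add: signed_indicator_def sum.distrib distrib_left
      sum_distrib_left mult.left_commute)

lemma signed_indicator_signed_axis: "signed_indicator C (signed_axis u) = of_bool (u \<in> C)"
proof -
  have "side_sign u * side_sign u = 1"
    unfolding side_sign_def by (cases u) auto
  moreover have "signed_indicator C (signed_axis u)
      = (\<Sum>v\<in>C. if v = u then side_sign u * side_sign u else 0)"
    unfolding signed_indicator_def signed_axis_def by (intro sum.cong) (auto simp: axis_def)
  ultimately show ?thesis by simp
qed

lemma signed_indicator_ray:
  "signed_indicator C (ray i j) = of_bool (Inl i \<in> C) - of_bool (Inr j \<in> C)"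
  by (simp add: ray_eq_signed_axis_diff linear_diff[OF linear_signed_indicator]
      signed_indicator_signed_axis)

lemma signed_indicator_vanishing_on_rays_imp_UNIV:
  fixes C :: "('a::finite + 'b::finite) set"
  assumes vanish: "\<And>i j. signed_indicator C (ray i j :: real^('a + 'b)) = 0" and "C \<noteq> {}"
  shows "C = UNIV"
proof -
  have "Inl i \<in> C \<longleftrightarrow> Inr j \<in> C" for i j
    using vanish[of i j] by (simp add: signed_indicator_ray of_bool_def split: if_splits)
  then show ?thesis
    using \<open>C \<noteq> {}\<close> by (metis UNIV_eq_I equals0I sum.exhaust)
qed

lemma rays_in_int_span_of_maximal:
  fixes B :: "(real^('a::finite + 'b::finite)) set"
  assumes "finite B" and B_rays: "B \<subseteq> rays" and rays_span: "rays \<subseteq> span B"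
  shows "ray i j \<in> int_span B"
proof -
  fix i0 :: 'a
  define C where "C = {u. signed_axis u - signed_axis (Inl i0) \<in> int_span B}"
  have vanish_B: "signed_indicator C x = 0" if "x \<in> B" for x
  proof -
    obtain i' j' where x: "x = ray i' j'" using \<open>x \<in> B\<close> B_rays unfolding rays_def by auto
    have edge: "signed_axis (Inl i') - signed_axis (Inr j') \<in> int_span B"
      using int_span_superset[OF \<open>finite B\<close> \<open>x \<in> B\<close>] unfolding x ray_eq_signed_axis_diff .
    have "Inl i' \<in> C \<longleftrightarrow> Inr j' \<in> C"
    proof
      assume "Inl i' \<in> C"
      then have "signed_axis (Inl i') - signed_axis (Inl i0) \<in> int_span B" by (simp add: C_def)
      from int_span_diff[OF this edge] show "Inr j' \<in> C" by (simp add: C_def)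
    next
      assume "Inr j' \<in> C"
      then have "signed_axis (Inr j') - signed_axis (Inl i0) \<in> int_span B" by (simp add: C_def)
      from int_span_add[OF this edge] show "Inl i' \<in> C" by (simp add: C_def)
    qed
    then show ?thesis unfolding x signed_indicator_ray by simp
  qed
  have "C = UNIV"
  proof (rule signed_indicator_vanishing_on_rays_imp_UNIV)
    show "signed_indicator C (ray i' j') = 0" for i' j'
    proof (rule linear_eq_0_on_span[OF linear_signed_indicator vanish_B])
      show "ray i' j' \<in> span B" using rays_span unfolding rays_def by auto
    qed
    have "Inl i0 \<in> C" unfolding C_def using int_span_0 by simp
    then show "C \<noteq> {}" by blast
  qed
  then have "signed_axis (Inl i) - signed_axis (Inl i0) \<in> int_span B"
    and "signed_axis (Inr j) - signed_axis (Inl i0) \<in> int_span B"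
    unfolding C_def by auto
  from int_span_diff[OF this] show ?thesis by (simp add: ray_eq_signed_axis_diff)
qed

lemma lattice_basis_of_maximal:
  fixes B :: "(real^('a::finite + 'b::finite)) set"
  assumes B_rays: "B \<subseteq> rays" and "independent B" and rays_span: "rays \<subseteq> span B"
  shows "lattice_basis B"
proof -
  have "finite B" using B_rays finite_rays by (rule finite_subset)
  have "int_span B \<subseteq> latN"
    using B_rays rays_subset_latN by (intro int_span_subset_latN) (rule order_trans)
  moreover have "latN \<subseteq> int_span B"
    by (rule latN_subset_int_span, rule rays_in_int_span_of_maximal[OF \<open>finite B\<close> B_rays rays_span])
  ultimately show ?thesis
    unfolding lattice_basis_def using \<open>finite B\<close> \<open>independent B\<close> by simp
qed

lemma smooth_cone_if_independent_rays:
  fixes S :: "(real^('a::finite + 'b::finite)) set"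
  assumes "S \<subseteq> rays" "independent S"
  shows "smooth_cone S"
proof -
  obtain B where "S \<subseteq> B" "B \<subseteq> rays" "independent B" "rays \<subseteq> span B"
    using maximal_independent_subset_extend[OF assms] by metis
  then show ?thesis unfolding smooth_cone_def by (metis lattice_basis_of_maximal)
qed

theorem mainTheorem11:
  fixes F :: "(real^('a::finite + 'b::finite)) set set"
  assumes "small_Q_factorialization F"
  shows "log_resolution F"
  unfolding log_resolution_def
proof
  fix S assume "S \<in> F"
  with assms have "S \<subseteq> rays" "independent S"
    unfolding small_Q_factorialization_def by auto
  then show "smooth_cone S" by (rule smooth_cone_if_independent_rays)
qed

end
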